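(* Let $m,n\ge 2$. The Hadamard product of two $m$th order $n$-dimensional strong Hankel tensors is a strong Hankel tensor.
   Context: An $m$th order $n$-dimensional real tensor $\mathcal{A}=(a_{i_1\cdots i_m})$ is a Hankel tensor if there is $v=(v_0,\dots,v_{(n-1)m})^\top\in\mathbb{R}^{(n-1)m+1}$ with $a_{i_1\cdots i_m}=v_{i_1+\cdots+i_m-m}$ for all $i_j\in\{1,\dots,n\}$. Let $N=\lceil((n-1)m+2)/2\rceil$. An associated Hankel matrix of $\mathcal{A}$ is the $N\times N$ matrix with $(i,j)$ entry $v_{i+j-2}$, where, if $(n-1)m$ is odd, $v_{2\lceil(n-1)m/2\rceil}$ is an additional (arbitrary) real number. $\mathcal{A}$ is a strong Hankel tensor if an associated Hankel matrix of it is positive semi-definite. The Hadamard product of $\mathcal{A}=(a_{i_1\cdots i_m})$ and $\mathcal{B}=(b_{i_1\cdots i_m})$ is $\mathcal{A}\circ\mathcal{B}=(a_{i_1\cdots i_m}b_{i_1\cdots i_m})$. *)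

theory Defs
  imports Complex_Main "HOL-Library.FuncSet"
begin

text \<open>An m-th order n-dimensional real tensor is represented as a function on index
  tuples \<open>i :: nat \<Rightarrow> nat\<close>; the relevant tuples are those with \<open>i j \<in> {1..n}\<close> for
  \<open>j < m\<close> (the index positions 1..m of the paper are 0..m-1 here), and \<open>i j = 0\<close>
  otherwise (extensional functions), so that only the entries on the valid index set matter.\<close>

definition tensor_indices :: "nat \<Rightarrow> nat \<Rightarrow> (nat \<Rightarrow> nat) set" where
  "tensor_indices m n = ({0..<m} \<rightarrow>\<^sub>E {1..n})"

definition hankel_gen :: "nat \<Rightarrow> nat \<Rightarrow> ((nat \<Rightarrow> nat) \<Rightarrow> real) \<Rightarrow> (nat \<Rightarrow> real) \<Rightarrow> bool" where
  "hankel_gen m n A v \<longleftrightarrow>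
     (\<forall>i\<in>tensor_indices m n. A i = v ((\<Sum>j<m. i j) - m))"

definition is_hankel_tensor :: "nat \<Rightarrow> nat \<Rightarrow> ((nat \<Rightarrow> nat) \<Rightarrow> real) \<Rightarrow> bool" where
  "is_hankel_tensor m n A \<longleftrightarrow> (\<exists>v. hankel_gen m n A v)"

definition hankel_size :: "nat \<Rightarrow> nat \<Rightarrow> nat" where
  "hankel_size m n = nat \<lceil>(real ((n - 1) * m) + 2) / 2\<rceil>"

definition psd_matrix :: "nat \<Rightarrow> (nat \<Rightarrow> nat \<Rightarrow> real) \<Rightarrow> bool" where
  "psd_matrix N M \<longleftrightarrow> (\<forall>i<N. \<forall>j<N. M i j = M j i) \<and>
     (\<forall>x :: nat \<Rightarrow> real. 0 \<le> (\<Sum>i<N. \<Sum>j<N. x i * M i j * x j))"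

text \<open>If (n-1)m is odd,
  the last entry v_{(n-1)m+1} is the additional arbitrary number; since v is an arbitrary
  function nat \<Rightarrow> real, that value is free.\<close>
definition assoc_hankel_matrix :: "(nat \<Rightarrow> real) \<Rightarrow> nat \<Rightarrow> nat \<Rightarrow> real" where
  "assoc_hankel_matrix v i j = v (i + j)"

definition is_strong_hankel_tensor :: "nat \<Rightarrow> nat \<Rightarrow> ((nat \<Rightarrow> nat) \<Rightarrow> real) \<Rightarrow> bool" where
  "is_strong_hankel_tensor m n A \<longleftrightarrow>
     (\<exists>v. hankel_gen m n A v \<and> psd_matrix (hankel_size m n) (assoc_hankel_matrix v))"

definition hadamard_tensor :: "((nat \<Rightarrow> nat) \<Rightarrow> real) \<Rightarrow> ((nat \<Rightarrow> nat) \<Rightarrow> real) \<Rightarrow> (nat \<Rightarrow> nat) \<Rightarrow> real" where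
  "hadamard_tensor A B i = A i * B i"

end

(*
  The associated Hankel matrix of the Hadamard product of two Hankel tensors is the entrywise
  product of their associated Hankel matrices, so the theorem reduces to the Schur product
  theorem. That is proved by induction on the set of rows outside of which M vanishes:
  pivoting on a row p with M p p > 0 splits M into its Schur complement, which is positive
  semidefinite and vanishes on row p as well, plus the rank-one matrix M i p * M p j / M p p,
  whose Hadamard product with P has the quadratic form of P at (x i * M i p) divided by M p p.
  A zero pivot forces the whole row to vanish.
*)
theory Submission
  imports Defs
begin

definition quad_form :: "nat \<Rightarrow> (nat \<Rightarrow> nat \<Rightarrow> real) \<Rightarrow> (nat \<Rightarrow> real) \<Rightarrow> real" where
  "quad_form N M x = (\<Sum>i<N. \<Sum>j<N. x i * M i j * x j)"

abbreviation symmetric_matrix :: "nat \<Rightarrow> (nat \<Rightarrow> nat \<Rightarrow> real) \<Rightarrow> bool" where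
  "symmetric_matrix N M \<equiv> \<forall>i<N. \<forall>j<N. M i j = M j i"

lemma psd_matrix_iff_quad_form:
  "psd_matrix N M \<longleftrightarrow> symmetric_matrix N M \<and> (\<forall>x. 0 \<le> quad_form N M x)"
  unfolding psd_matrix_def quad_form_def ..

lemma quad_form_add:
  assumes "symmetric_matrix N M"
  shows "quad_form N M (\<lambda>i. x i + y i)
       = quad_form N M x + 2 * (\<Sum>i<N. \<Sum>j<N. y i * M i j * x j) + quad_form N M y"
proof -
  have "(\<Sum>i<N. \<Sum>j<N. x i * M i j * y j) = (\<Sum>j<N. \<Sum>i<N. x i * M i j * y j)"
    by (rule sum.swap)
  also have "\<dots> = (\<Sum>i<N. \<Sum>j<N. y i * M i j * x j)"
    using assms by (intro sum.cong refl) (simp add: mult.commute mult.left_commute)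
  finally have "(\<Sum>i<N. \<Sum>j<N. x i * M i j * y j) = (\<Sum>i<N. \<Sum>j<N. y i * M i j * x j)" .
  then show ?thesis
    unfolding quad_form_def by (simp add: algebra_simps sum.distrib)
qed

lemma quad_form_add_basis:
  assumes "symmetric_matrix N M" and "p < N"
  shows "quad_form N M (\<lambda>i. x i + (if i = p then t else 0))
       = quad_form N M x + 2 * t * (\<Sum>j<N. M p j * x j) + t\<^sup>2 * M p p"
proof -
  let ?e = "\<lambda>i. if i = p then t else 0"
  have "(\<Sum>i<N. \<Sum>j<N. ?e i * M i j * x j) = t * (\<Sum>j<N. M p j * x j)"
  proof -
    have "(\<Sum>i<N. \<Sum>j<N. ?e i * M i j * x j)
        = (\<Sum>i<N. if i = p then t * (\<Sum>j<N. M p j * x j) else 0)"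
      by (intro sum.cong) (auto simp: sum_distrib_left mult.assoc)
    then show ?thesis
      using assms(2) by simp
  qed
  moreover have "quad_form N M ?e = t\<^sup>2 * M p p"
  proof -
    have "(\<Sum>j<N. ?e i * M i j * ?e j) = (if i = p then t\<^sup>2 * M p p else 0)" for i
    proof -
      have "(\<Sum>j<N. ?e i * M i j * ?e j) = (\<Sum>j<N. if j = p then ?e i * M i p * t else 0)"
        by (intro sum.cong) auto
      then show ?thesis
        using assms(2) by (simp add: power2_eq_square)
    qed
    then show ?thesis
      using assms(2) by (simp add: quad_form_def)
  qed
  ultimately show ?thesis
    using quad_form_add[OF assms(1)] by (simp add: mult.assoc)
qed

lemma psd_diag_nonneg:
  assumes "psd_matrix N M" and "p < N"
  shows "0 \<le> M p p"
proof -
  have "symmetric_matrix N M" and nonneg: "\<And>x. 0 \<le> quad_form N M x"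
    using assms(1) by (simp_all add: psd_matrix_iff_quad_form)
  moreover have "quad_form N M (\<lambda>_. 0) = 0"
    by (simp add: quad_form_def)
  ultimately show ?thesis
    using quad_form_add_basis[of N M p "\<lambda>_. 0" 1] nonneg[of "\<lambda>i. 0 + (if i = p then 1 else 0)"] assms(2)
    by simp
qed

lemma psd_row_eq_zero_if_diag_eq_zero:
  assumes psd: "psd_matrix N M" and "p < N" "j < N" and "M p p = 0"
  shows "M p j = 0"
proof (rule ccontr)
  assume "M p j \<noteq> 0"
  define x where "x i = (if i = j then 1 else 0 :: real)" for i
  define t where "t = - (quad_form N M x + 1) / (2 * M p j)"
  have "(\<Sum>k<N. M p k * x k) = M p j"
    using \<open>j < N\<close> by (simp add: x_def if_distrib cong: if_cong)
  moreover have "2 * t * M p j = - (quad_form N M x + 1)"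
    using \<open>M p j \<noteq> 0\<close> by (simp add: t_def)
  moreover have "0 \<le> quad_form N M (\<lambda>i. x i + (if i = p then t else 0))"
    using psd by (simp add: psd_matrix_iff_quad_form)
  ultimately show False
    using quad_form_add_basis[of N M p x t] psd assms(2,4) by (simp add: psd_matrix_iff_quad_form)
qed

definition schur_complement :: "(nat \<Rightarrow> nat \<Rightarrow> real) \<Rightarrow> nat \<Rightarrow> nat \<Rightarrow> nat \<Rightarrow> real" where
  "schur_complement M p i j = M i j - M i p * M p j / M p p"

lemma quad_form_schur_complement:
  assumes "symmetric_matrix N M" and "p < N"
  shows "quad_form N (schur_complement M p) y = quad_form N M y - (\<Sum>j<N. M p j * y j)\<^sup>2 / M p p"
proof -
  have "(\<Sum>i<N. \<Sum>j<N. y i * (M i p * M p j / M p p) * y j)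
      = (\<Sum>i<N. y i * M i p) * (\<Sum>j<N. M p j * y j) / M p p"
    by (simp add: sum_product sum_divide_distrib algebra_simps)
  also have "(\<Sum>i<N. y i * M i p) = (\<Sum>j<N. M p j * y j)"
    using assms by (intro sum.cong) (auto simp: mult.commute)
  finally show ?thesis
    unfolding quad_form_def schur_complement_def
    by (simp add: right_diff_distrib left_diff_distrib sum_subtractf power2_eq_square)
qed

lemma psd_schur_complement:
  assumes psd: "psd_matrix N M" and "p < N" and "0 < M p p"
  shows "psd_matrix N (schur_complement M p)"
proof -
  have sym: "symmetric_matrix N M"
    using psd by (simp add: psd_matrix_iff_quad_form)
  have "0 \<le> quad_form N (schur_complement M p) y" for y
  proof -
    define c where "c = (\<Sum>j<N. M p j * y j)"
    have "0 \<le> quad_form N M (\<lambda>i. y i + (if i = p then - c / M p p else 0))"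
      using psd by (simp add: psd_matrix_iff_quad_form)
    also have "\<dots> = quad_form N M y - c\<^sup>2 / M p p"
      using quad_form_add_basis[OF sym \<open>p < N\<close>] \<open>0 < M p p\<close>
      by (simp add: c_def power2_eq_square field_simps)
    finally show ?thesis
      using quad_form_schur_complement[OF sym \<open>p < N\<close>] by (simp add: c_def)
  qed
  moreover have "symmetric_matrix N (schur_complement M p)"
    using sym \<open>p < N\<close> by (simp add: schur_complement_def)
  ultimately show ?thesis
    by (simp add: psd_matrix_iff_quad_form)
qed

lemma quad_form_hadamard_schur_complement:
  assumes "symmetric_matrix N M" and "p < N"
  shows "quad_form N (\<lambda>i j. M i j * P i j) x
       = quad_form N (\<lambda>i j. schur_complement M p i j * P i j) x
         + quad_form N P (\<lambda>i. x i * M i p) / M p p"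
proof -
  have "(\<Sum>i<N. \<Sum>j<N. x i * (M i p * M p j / M p p * P i j) * x j)
      = (\<Sum>i<N. \<Sum>j<N. x i * M i p * P i j * (x j * M j p)) / M p p"
    unfolding sum_divide_distrib
    using assms by (intro sum.cong refl) (auto simp: algebra_simps)
  then show ?thesis
    unfolding quad_form_def schur_complement_def
    by (simp add: algebra_simps sum_subtractf sum.distrib)
qed

lemma psd_hadamard_of_rows_supported:
  assumes "finite S" and "S \<subseteq> {..<N}"
    and "psd_matrix N M" and "\<forall>i<N. \<forall>j<N. i \<notin> S \<longrightarrow> M i j = 0"
    and P: "psd_matrix N P"
  shows "0 \<le> quad_form N (\<lambda>i j. M i j * P i j) x"
  using assms(1-4)
proof (induction S arbitrary: M rule: finite_induct)
  case empty
  then show ?case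
    by (simp add: quad_form_def)
next
  case (insert p F)
  have "p < N"
    using insert.prems(1) by simp
  have sym: "symmetric_matrix N M"
    using insert.prems(2) by (simp add: psd_matrix_iff_quad_form)
  show ?case
  proof (cases "M p p = 0")
    case True
    then have "\<forall>i<N. \<forall>j<N. i \<notin> F \<longrightarrow> M i j = 0"
      using insert.prems psd_row_eq_zero_if_diag_eq_zero[OF _ \<open>p < N\<close>] by blast
    then show ?thesis
      using insert.IH insert.prems(1,2) by blast
  next
    case False
    then have "0 < M p p"
      using psd_diag_nonneg[OF insert.prems(2) \<open>p < N\<close>] by simp
    have "\<forall>i<N. \<forall>j<N. i \<notin> F \<longrightarrow> schur_complement M p i j = 0"
    proof (intro allI impI)
      fix i j
      assume "i < N" "j < N" "i \<notin> F"
      then show "schur_complement M p i j = 0"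
        using insert.prems(3) \<open>p < N\<close> False by (cases "i = p") (auto simp: schur_complement_def)
    qed
    then have "0 \<le> quad_form N (\<lambda>i j. schur_complement M p i j * P i j) x"
      using insert.IH insert.prems(1) psd_schur_complement[OF insert.prems(2) \<open>p < N\<close> \<open>0 < M p p\<close>]
      by blast
    moreover have "0 \<le> quad_form N P (\<lambda>i. x i * M i p) / M p p"
      using P \<open>0 < M p p\<close> by (simp add: psd_matrix_iff_quad_form)
    ultimately show ?thesis
      using quad_form_hadamard_schur_complement[OF sym \<open>p < N\<close>] by simp
  qed
qed

theorem schur_product_psd:
  assumes "psd_matrix N M" and "psd_matrix N P"
  shows "psd_matrix N (\<lambda>i j. M i j * P i j)"
  using psd_hadamard_of_rows_supported[of "{..<N}" N M P] assms
  by (simp add: psd_matrix_iff_quad_form)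

lemma hankel_gen_hadamard:
  assumes "hankel_gen m n A v" and "hankel_gen m n B u"
  shows "hankel_gen m n (hadamard_tensor A B) (\<lambda>k. v k * u k)"
  using assms by (simp add: hankel_gen_def hadamard_tensor_def)

theorem proposition2:
  fixes m n :: nat and A B :: "(nat \<Rightarrow> nat) \<Rightarrow> real"
  assumes "m \<ge> 2" and "n \<ge> 2"
    and "is_strong_hankel_tensor m n A"
    and "is_strong_hankel_tensor m n B"
  shows "is_strong_hankel_tensor m n (hadamard_tensor A B)"
proof -
  obtain v where v: "hankel_gen m n A v" "psd_matrix (hankel_size m n) (assoc_hankel_matrix v)"
    using assms(3) unfolding is_strong_hankel_tensor_def by blast
  obtain u where u: "hankel_gen m n B u" "psd_matrix (hankel_size m n) (assoc_hankel_matrix u)"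
    using assms(4) unfolding is_strong_hankel_tensor_def by blast
  have "assoc_hankel_matrix (\<lambda>k. v k * u k)
      = (\<lambda>i j. assoc_hankel_matrix v i j * assoc_hankel_matrix u i j)"
    unfolding assoc_hankel_matrix_def ..
  then have "psd_matrix (hankel_size m n) (assoc_hankel_matrix (\<lambda>k. v k * u k))"
    using schur_product_psd[OF v(2) u(2)] by simp
  then show ?thesis
    using hankel_gen_hadamard[OF v(1) u(1)] unfolding is_strong_hankel_tensor_def by blast
qed

end
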